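(* For $i\in[2]$, let $A^ix^i+b^iy\le d^i$ be totally dual integral inequality systems in variables $x^i\in\mathbb{R}^{n_i}$ and a common scalar variable $y\in\mathbb{R}$, where $A^i\in\mathbb{Z}^{m_i\times n_i}$ and $b^i,d^i\in\mathbb{Z}^{m_i}$, and suppose each of these systems implies $0\le y\le1$. Then the combined system $A^1x^1+b^1y\le d^1$, $A^2x^2+b^2y\le d^2$ (in the variables $(x^1,x^2,y)$) is totally dual integral.
   Context: A system $Ax\le b$ with rational data is totally dual integral if for every integral objective $w$ for which $\max\{w^\top x: Ax\le b\}$ is finite, the dual $\min\{b^\top u: A^\top u=w,\ u\ge0\}$ has an integral optimal solution. *)

theory Defs
  imports Main "HOL-Library.Set_Algebras" Complex_Main
begin

text \<open>Matrices are
  functions nat \<Rightarrow> nat \<Rightarrow> real (row, column), vectors nat \<Rightarrow> real;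
  only the entries with row index < m and column index < n matter.\<close>

definition feasible :: "nat \<Rightarrow> nat \<Rightarrow> (nat \<Rightarrow> nat \<Rightarrow> real) \<Rightarrow> (nat \<Rightarrow> real) \<Rightarrow> (nat \<Rightarrow> real) \<Rightarrow> bool" where
  "feasible m n A d x \<longleftrightarrow> (\<forall>r<m. (\<Sum>j<n. A r j * x j) \<le> d r)"

definition dual_feasible :: "nat \<Rightarrow> nat \<Rightarrow> (nat \<Rightarrow> nat \<Rightarrow> real) \<Rightarrow> (nat \<Rightarrow> real) \<Rightarrow> (nat \<Rightarrow> real) \<Rightarrow> bool" where
  "dual_feasible m n A w u \<longleftrightarrow> (\<forall>r<m. u r \<ge> 0) \<and> (\<forall>j<n. (\<Sum>r<m. A r j * u r) = w j)"

definition TDI :: "nat \<Rightarrow> nat \<Rightarrow> (nat \<Rightarrow> nat \<Rightarrow> real) \<Rightarrow> (nat \<Rightarrow> real) \<Rightarrow> bool" where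
  "TDI m n A d \<longleftrightarrow>
    (\<forall>w :: nat \<Rightarrow> int.
       (\<exists>x. feasible m n A d x \<and>
            (\<forall>x'. feasible m n A d x' \<longrightarrow> (\<Sum>j<n. of_int (w j) * x' j) \<le> (\<Sum>j<n. of_int (w j) * x j)))
       \<longrightarrow> (\<exists>u :: nat \<Rightarrow> int.
              dual_feasible m n A (\<lambda>j. of_int (w j)) (\<lambda>r. of_int (u r)) \<and>
              (\<forall>u'. dual_feasible m n A (\<lambda>j. of_int (w j)) u' \<longrightarrow>
                    (\<Sum>r<m. d r * of_int (u r)) \<le> (\<Sum>r<m. d r * u' r))))"

text \<open>The system A x + b y \<le> d in variables (x_0..x_{n-1}, y): y is column n.\<close>
definition sys_mat :: "nat \<Rightarrow> (nat \<Rightarrow> nat \<Rightarrow> int) \<Rightarrow> (nat \<Rightarrow> int) \<Rightarrow> nat \<Rightarrow> nat \<Rightarrow> real" where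
  "sys_mat n A b = (\<lambda>r c. if c < n then of_int (A r c) else if c = n then of_int (b r) else 0)"

text \<open>Combined system: variables x^1 (columns 0..n1-1), x^2 (columns n1..n1+n2-1),
  y (column n1+n2); rows 0..m1-1 from system 1, rows m1..m1+m2-1 from system 2.\<close>
definition comb_mat :: "nat \<Rightarrow> nat \<Rightarrow> nat \<Rightarrow> (nat \<Rightarrow> nat \<Rightarrow> int) \<Rightarrow> (nat \<Rightarrow> int)
     \<Rightarrow> (nat \<Rightarrow> nat \<Rightarrow> int) \<Rightarrow> (nat \<Rightarrow> int) \<Rightarrow> nat \<Rightarrow> nat \<Rightarrow> real" where
  "comb_mat m1 n1 n2 A1 b1 A2 b2 = (\<lambda>r c.
     if r < m1 then
       (if c < n1 then of_int (A1 r c) else if c = n1 + n2 then of_int (b1 r) else 0)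
     else
       (if n1 \<le> c \<and> c < n1 + n2 then of_int (A2 (r - m1) (c - n1))
        else if c = n1 + n2 then of_int (b2 (r - m1)) else 0))"

definition comb_rhs :: "nat \<Rightarrow> (nat \<Rightarrow> int) \<Rightarrow> (nat \<Rightarrow> int) \<Rightarrow> nat \<Rightarrow> real" where
  "comb_rhs m1 d1 d2 = (\<lambda>r. if r < m1 then of_int (d1 r) else of_int (d2 (r - m1)))"

end

theory Submission
  imports Defs
begin

text \<open>For \<open>i = 1, 2\<close> let \<open>G\<^sub>i(t)\<close> be the optimum of \<open>w\<^sup>i x\<^sup>i + t y\<close> over the
  \<open>i\<close>-th system. Since every feasible point has \<open>0 \<le> y \<le> 1\<close>, \<open>G\<^sub>i\<close> is nondecreasing
  and 1-Lipschitz, and by total dual integrality and LP duality it is integral at integers;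
  hence it is affine on every interval \<open>[k, k + 1]\<close>. An optimal dual solution of the
  combined system for the objective \<open>(w\<^sup>1, w\<^sup>2, c)\<close> splits into dual solutions of the two
  systems for \<open>(w\<^sup>1, t)\<close> and \<open>(w\<^sup>2, c - t)\<close>, so its value is at least
  \<open>G\<^sub>1(t) + G\<^sub>2(c - t)\<close>. This sum is affine in \<open>t\<close> on \<open>[\<lfloor>t\<rfloor>, \<lfloor>t\<rfloor> + 1]\<close>, so it is no
  larger at one of the two endpoints \<open>k\<close>; integral optimal duals of the two systems for
  \<open>(w\<^sup>1, k)\<close> and \<open>(w\<^sup>2, c - k)\<close> then glue to an integral optimal dual of the combined
  system.\<close>

section \<open>Farkas' lemma by Fourier-Motzkin elimination\<close>

definition dot :: "nat \<Rightarrow> (nat \<Rightarrow> real) \<Rightarrow> (nat \<Rightarrow> real) \<Rightarrow> real" where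
  "dot n a x = (\<Sum>j<n. a j * x j)"

lemma dot_Suc_upd: "dot (Suc n) a (x(n := t)) = dot n a x + a n * t"
  by (simp add: dot_def)

text \<open>A pair \<open>(a, \<beta>)\<close> encodes the linear constraint \<open>dot n a x \<le> \<beta>\<close>.\<close>

inductive_set conic_hull :: "((nat \<Rightarrow> real) \<times> real) set \<Rightarrow> ((nat \<Rightarrow> real) \<times> real) set"
  for S where
  zero: "(\<lambda>_. 0, 0) \<in> conic_hull S"
| step: "c \<in> conic_hull S \<Longrightarrow> s \<in> S \<Longrightarrow> 0 \<le> l \<Longrightarrow>
     (\<lambda>j. fst c j + l * fst s j, snd c + l * snd s) \<in> conic_hull S"

lemma conic_hull_inc: "s \<in> S \<Longrightarrow> s \<in> conic_hull S"
  using conic_hull.step[OF conic_hull.zero, of s S 1] by simp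

lemma conic_hull_add:
  assumes "c2 \<in> conic_hull S" "c1 \<in> conic_hull S"
  shows "(\<lambda>j. fst c1 j + fst c2 j, snd c1 + snd c2) \<in> conic_hull S"
  using assms
proof (induction rule: conic_hull.induct)
  case zero
  then show ?case by simp
next
  case (step c s l)
  from conic_hull.step[OF step.IH[OF step.prems] step.hyps(2,3)] show ?case
    by (simp add: add.assoc)
qed

lemma conic_hull_scale:
  assumes "c \<in> conic_hull S" "0 \<le> \<mu>"
  shows "(\<lambda>j. \<mu> * fst c j, \<mu> * snd c) \<in> conic_hull S"
  using assms
proof (induction rule: conic_hull.induct)
  case zero
  then show ?case by (simp add: conic_hull.zero)
next
  case (step c s l)
  have "0 \<le> \<mu> * l" using step by simp
  from conic_hull.step[OF step.IH[OF step.prems] step.hyps(2) this] show ?case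
    by (simp add: distrib_left mult.assoc)
qed

lemma conic_hull_trans:
  assumes "S' \<subseteq> conic_hull S"
  shows "conic_hull S' \<subseteq> conic_hull S"
proof
  fix c assume "c \<in> conic_hull S'"
  then show "c \<in> conic_hull S"
  proof (induction rule: conic_hull.induct)
    case zero
    then show ?case by (rule conic_hull.zero)
  next
    case (step c s l)
    have "(\<lambda>j. l * fst s j, l * snd s) \<in> conic_hull S"
      using step assms by (intro conic_hull_scale) auto
    from conic_hull_add[OF this step.IH] show ?case by simp
  qed
qed

lemma conic_hull_coord_zero:
  assumes "\<forall>s\<in>S. fst s k = 0" "c \<in> conic_hull S"
  shows "fst c k = 0"
  using assms(2) by (induction rule: conic_hull.induct) (auto simp: assms(1))

lemma conic_hull_image_repr:
  assumes "finite I" "c \<in> conic_hull (f ` I)"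
  shows "\<exists>u. (\<forall>i\<in>I. 0 \<le> u i) \<and> (\<forall>j. fst c j = (\<Sum>i\<in>I. fst (f i) j * u i))
             \<and> snd c = (\<Sum>i\<in>I. snd (f i) * u i)"
  using assms(2)
proof (induction rule: conic_hull.induct)
  case zero
  show ?case by (intro exI[of _ "\<lambda>_. 0"]) simp
next
  case (step c s l)
  obtain u where u: "\<forall>i\<in>I. 0 \<le> u i" "\<forall>j. fst c j = (\<Sum>i\<in>I. fst (f i) j * u i)"
    "snd c = (\<Sum>i\<in>I. snd (f i) * u i)" using step.IH by blast
  obtain i0 where i0: "i0 \<in> I" "s = f i0" using step.hyps(2) by blast
  define u' where "u' i = u i + (if i = i0 then l else 0)" for i
  have sum_u': "(\<Sum>i\<in>I. g i * u' i) = (\<Sum>i\<in>I. g i * u i) + l * g i0" for g :: "'a \<Rightarrow> real"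
    using assms(1) i0(1)
    by (simp add: u'_def distrib_left sum.distrib if_distrib[of "\<lambda>x. g _ * x"] sum.delta
        mult.commute cong: if_cong)
  have "\<forall>i\<in>I. 0 \<le> u' i" using u(1) step.hyps(3) by (simp add: u'_def)
  then show ?case using u(2,3) i0(2) by (intro exI[of _ u']) (simp add: sum_u')
qed

definition fm_comb :: "nat \<Rightarrow> (nat \<Rightarrow> real) \<times> real \<Rightarrow> (nat \<Rightarrow> real) \<times> real \<Rightarrow> (nat \<Rightarrow> real) \<times> real"
  where "fm_comb n p q =
    (\<lambda>j. fst p n * fst q j - fst q n * fst p j, fst p n * snd q - fst q n * snd p)"

definition fm_elim :: "nat \<Rightarrow> ((nat \<Rightarrow> real) \<times> real) set \<Rightarrow> ((nat \<Rightarrow> real) \<times> real) set"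
  where "fm_elim n S = {s \<in> S. fst s n = 0} \<union>
     (\<lambda>(p, q). fm_comb n p q) ` ({p \<in> S. 0 < fst p n} \<times> {q \<in> S. fst q n < 0})"

lemma finite_fm_elim: "finite S \<Longrightarrow> finite (fm_elim n S)"
  by (simp add: fm_elim_def)

lemma fm_elim_coord: "s \<in> fm_elim n S \<Longrightarrow> fst s n = 0"
  by (auto simp: fm_elim_def fm_comb_def)

lemma fm_comb_in_conic_hull:
  assumes "p \<in> S" "q \<in> S" "0 \<le> fst p n" "fst q n \<le> 0"
  shows "fm_comb n p q \<in> conic_hull S"
proof -
  have "- fst q n \<ge> 0" using assms(4) by simp
  from conic_hull.step[OF conic_hull.step[OF conic_hull.zero assms(1) this] assms(2,3)]
  show ?thesis by (simp add: fm_comb_def algebra_simps)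
qed

lemma fm_elim_subset: "fm_elim n S \<subseteq> conic_hull S"
proof
  fix s assume "s \<in> fm_elim n S"
  then consider "s \<in> S"
    | p q where "p \<in> S" "q \<in> S" "0 < fst p n" "fst q n < 0" "s = fm_comb n p q"
    by (auto simp: fm_elim_def)
  then show "s \<in> conic_hull S"
    by cases (auto intro: conic_hull_inc fm_comb_in_conic_hull)
qed

lemma dot_fm_comb:
  "dot k (fst (fm_comb n p q)) x = fst p n * dot k (fst q) x - fst q n * dot k (fst p) x"
  by (simp add: dot_def fm_comb_def sum_subtractf sum_distrib_left algebra_simps)

lemma finite_sets_separated:
  fixes L U :: "real set"
  assumes "finite L" "finite U" "\<And>l u. l \<in> L \<Longrightarrow> u \<in> U \<Longrightarrow> l \<le> u"
  shows "\<exists>t. (\<forall>l\<in>L. l \<le> t) \<and> (\<forall>u\<in>U. t \<le> u)"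
proof (cases "L = {}")
  case True
  then show ?thesis
    using assms(2) by (intro exI[of _ "if U = {} then 0 else Min U"]) auto
next
  case False
  then show ?thesis
    using assms Max_in[of L] by (intro exI[of _ "Max L"]) auto
qed

lemma fm_comb_ratio_le:
  assumes "dot n (fst (fm_comb n p q)) x \<le> snd (fm_comb n p q)" "0 < fst p n" "fst q n < 0"
  shows "(snd q - dot n (fst q) x) / fst q n \<le> (snd p - dot n (fst p) x) / fst p n"
proof -
  from assms(1) have "fst q n * (snd p - dot n (fst p) x) \<le> fst p n * (snd q - dot n (fst q) x)"
    unfolding dot_fm_comb by (simp add: fm_comb_def algebra_simps)
  then show ?thesis using assms(2,3) by (simp add: divide_le_eq le_divide_eq mult.commute)
qed

lemma fm_elim_feasible:
  assumes "finite S" and x: "\<forall>s\<in>fm_elim n S. dot n (fst s) x \<le> snd s"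
  shows "\<exists>t. \<forall>s\<in>S. dot (Suc n) (fst s) (x(n := t)) \<le> snd s"
proof -
  define slack where "slack s = snd s - dot n (fst s) x" for s
  define P where "P = {p \<in> S. 0 < fst p n}"
  define N where "N = {q \<in> S. fst q n < 0}"
  have sep: "slack q / fst q n \<le> slack p / fst p n" if "p \<in> P" "q \<in> N" for p q
  proof -
    have "fm_comb n p q \<in> fm_elim n S" using that by (force simp: fm_elim_def P_def N_def)
    with x that show ?thesis unfolding slack_def P_def N_def by (blast intro: fm_comb_ratio_le)
  qed
  have "finite P" "finite N" using assms(1) by (simp_all add: P_def N_def)
  then have "\<exists>t. (\<forall>l\<in>(\<lambda>q. slack q / fst q n) ` N. l \<le> t) \<and>
      (\<forall>u\<in>(\<lambda>p. slack p / fst p n) ` P. t \<le> u)"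
    using sep by (intro finite_sets_separated) auto
  then obtain t where lo: "\<forall>q\<in>N. slack q / fst q n \<le> t"
    and hi: "\<forall>p\<in>P. t \<le> slack p / fst p n"
    by auto
  have bound: "fst s n * t \<le> slack s" if "s \<in> S" for s
  proof (cases "fst s n" "0::real" rule: linorder_cases)
    case less
    then have "slack s / fst s n \<le> t" using lo that unfolding N_def by blast
    then show ?thesis using less by (simp add: neg_divide_le_eq mult.commute)
  next
    case equal
    then have "s \<in> fm_elim n S" using that by (simp add: fm_elim_def)
    then show ?thesis using x equal by (simp add: slack_def)
  next
    case greater
    then have "t \<le> slack s / fst s n" using hi that unfolding P_def by blast
    then show ?thesis using greater by (simp add: pos_le_divide_eq mult.commute)
  qed
  show ?thesis
  proof (intro exI[of _ t] ballI)
    fix s assume "s \<in> S"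
    from bound[OF this] show "dot (Suc n) (fst s) (x(n := t)) \<le> snd s"
      by (simp add: dot_Suc_upd slack_def)
  qed
qed

lemma fourier_motzkin:
  assumes "finite S" "\<nexists>x. \<forall>s\<in>S. dot n (fst s) x \<le> snd s"
  shows "\<exists>c\<in>conic_hull S. (\<forall>j<n. fst c j = 0) \<and> snd c < 0"
  using assms
proof (induction n arbitrary: S)
  case 0
  then obtain s where "s \<in> S" "snd s < 0" by (force simp: dot_def)
  then show ?case by (force intro: conic_hull_inc)
next
  case (Suc n)
  have "\<nexists>x. \<forall>s\<in>fm_elim n S. dot n (fst s) x \<le> snd s"
    using fm_elim_feasible[OF Suc.prems(1)] Suc.prems(2) by blast
  then obtain c where c: "c \<in> conic_hull (fm_elim n S)" "\<forall>j<n. fst c j = 0" "snd c < 0"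
    using Suc.IH finite_fm_elim Suc.prems(1) by blast
  have "fst c n = 0" using conic_hull_coord_zero fm_elim_coord c(1) by blast
  with c(2) have "\<forall>j<Suc n. fst c j = 0" by (simp add: less_Suc_eq)
  moreover have "c \<in> conic_hull S" using c(1) conic_hull_trans[OF fm_elim_subset] by blast
  ultimately show ?case using c(3) by blast
qed

lemma farkas:
  assumes "\<nexists>x. feasible m n A d x"
  shows "\<exists>v. (\<forall>r<m. 0 \<le> v r) \<and> (\<forall>j<n. (\<Sum>r<m. A r j * v r) = 0) \<and> (\<Sum>r<m. d r * v r) < 0"
proof -
  let ?row = "\<lambda>r. (A r, d r)"
  have "\<nexists>x. \<forall>s\<in>?row ` {..<m}. dot n (fst s) x \<le> snd s"
    using assms by (auto simp: feasible_def dot_def)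
  from fourier_motzkin[OF finite_imageI[OF finite_lessThan] this]
  obtain c where c: "c \<in> conic_hull (?row ` {..<m})" "\<forall>j<n. fst c j = 0" "snd c < 0"
    by blast
  from conic_hull_image_repr[OF finite_lessThan c(1)] obtain v where
    "\<forall>r<m. 0 \<le> v r" "\<forall>j. fst c j = (\<Sum>r<m. A r j * v r)" "snd c = (\<Sum>r<m. d r * v r)"
    by auto
  then show ?thesis using c(2,3) by (intro exI[of _ v]) auto
qed

section \<open>Linear programming duality\<close>

lemma feasible_row_combination_le:
  assumes "feasible m n A d x" "\<forall>r<m. 0 \<le> v r"
  shows "(\<Sum>j<n. (\<Sum>r<m. A r j * v r) * x j) \<le> (\<Sum>r<m. d r * v r)"
proof -
  have "(\<Sum>j<n. (\<Sum>r<m. A r j * v r) * x j) = (\<Sum>r<m. (\<Sum>j<n. A r j * x j) * v r)"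
    by (simp add: sum_distrib_left sum_distrib_right algebra_simps) (rule sum.swap)
  also have "\<dots> \<le> (\<Sum>r<m. d r * v r)"
    using assms by (intro sum_mono mult_right_mono) (auto simp: feasible_def)
  finally show ?thesis .
qed

lemma weak_duality:
  assumes "feasible m n A d x" "dual_feasible m n A w u"
  shows "(\<Sum>j<n. w j * x j) \<le> (\<Sum>r<m. d r * u r)"
  using feasible_row_combination_le[OF assms(1), of u] assms(2) by (simp add: dual_feasible_def)

lemma dual_feasible_cong:
  "(\<And>r. r < m \<Longrightarrow> u r = u' r) \<Longrightarrow> dual_feasible m n A w u \<longleftrightarrow> dual_feasible m n A w u'"
  by (simp add: dual_feasible_def)

lemma feasible_add_row_iff:
  "feasible (Suc m) n (A(m := a)) (d(m := \<beta>)) x \<longleftrightarrow>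
     feasible m n A d x \<and> (\<Sum>j<n. a j * x j) \<le> \<beta>"
  by (auto simp: feasible_def less_Suc_eq)

lemma feasible_level_set_or_bound:
  assumes x0: "feasible m n A d x0"
  obtains x where "feasible m n A d x" "S \<le> (\<Sum>j<n. w j * x j)"
  | M where "M < S" "\<And>x. feasible m n A d x \<Longrightarrow> (\<Sum>j<n. w j * x j) \<le> M"
proof (cases "\<exists>x. feasible (Suc m) n (A(m := \<lambda>j. - w j)) (d(m := - S)) x")
  case True
  then show ?thesis using that(1) by (auto simp: feasible_add_row_iff sum_negf)
next
  case False
  from farkas[OF this] obtain v where v: "\<forall>r<Suc m. 0 \<le> v r"
    "\<forall>j<n. (\<Sum>r<Suc m. (A(m := \<lambda>j. - w j)) r j * v r) = 0"
    "(\<Sum>r<Suc m. (d(m := - S)) r * v r) < 0" by blast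
  have cols: "(\<Sum>r<m. A r j * v r) = w j * v m" if "j < n" for j
    using v(2) that by simp
  have rhs: "(\<Sum>r<m. d r * v r) < S * v m" using v(3) by simp
  have bound: "v m * (\<Sum>j<n. w j * x j) \<le> (\<Sum>r<m. d r * v r)" if "feasible m n A d x" for x
  proof -
    have "v m * (\<Sum>j<n. w j * x j) = (\<Sum>j<n. (\<Sum>r<m. A r j * v r) * x j)"
      unfolding sum_distrib_left by (intro sum.cong refl) (subst cols, simp_all)
    also have "\<dots> \<le> (\<Sum>r<m. d r * v r)"
      using v(1) by (intro feasible_row_combination_le[OF that]) auto
    finally show ?thesis .
  qed
  have "v m \<noteq> 0" using bound[OF x0] rhs by auto
  moreover have "0 \<le> v m" using v(1) by simp
  ultimately have "0 < v m" by simp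
  show ?thesis
  proof (rule that(2))
    show "(\<Sum>r<m. d r * v r) / v m < S" using rhs \<open>0 < v m\<close> by (simp add: divide_less_eq)
    show "(\<Sum>j<n. w j * x j) \<le> (\<Sum>r<m. d r * v r) / v m" if "feasible m n A d x" for x
      using bound[OF that] \<open>0 < v m\<close> by (simp add: pos_le_divide_eq mult.commute)
  qed
qed

lemma lp_optimum_exists:
  assumes x0: "feasible m n A d x0"
    and bounded: "\<And>x. feasible m n A d x \<Longrightarrow> (\<Sum>j<n. w j * x j) \<le> M"
  obtains x where "feasible m n A d x"
    "\<And>x'. feasible m n A d x' \<Longrightarrow> (\<Sum>j<n. w j * x' j) \<le> (\<Sum>j<n. w j * x j)"
proof -
  define S where "S = (SUP x\<in>{x. feasible m n A d x}. \<Sum>j<n. w j * x j)"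
  have le_S: "(\<Sum>j<n. w j * x j) \<le> S" if "feasible m n A d x" for x
    unfolding S_def using bounded that by (intro cSUP_upper) (auto simp: bdd_above_def)
  show ?thesis
  proof (rule feasible_level_set_or_bound[OF x0, of S w])
    fix x assume "feasible m n A d x" "S \<le> (\<Sum>j<n. w j * x j)"
    then show thesis using that le_S by (meson order_trans)
  next
    fix M' assume "M' < S" "\<And>x. feasible m n A d x \<Longrightarrow> (\<Sum>j<n. w j * x j) \<le> M'"
    moreover have "S \<le> M'" unfolding S_def using x0 calculation(2) by (intro cSUP_least) auto
    ultimately show thesis by simp
  qed
qed

lemma optimal_no_improving_ray:
  assumes x: "feasible m n A d x"
    and opt: "\<And>x'. feasible m n A d x' \<Longrightarrow> (\<Sum>j<n. w j * x' j) \<le> (\<Sum>j<n. w j * x j)"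
    and "0 \<le> \<tau>" and z: "\<forall>r<m. (\<Sum>j<n. A r j * z j) \<le> \<tau> * d r"
  shows "(\<Sum>j<n. w j * z j) \<le> \<tau> * (\<Sum>j<n. w j * x j)"
proof -
  define p where "p j = (z j + x j) / (\<tau> + 1)" for j
  have lin: "(\<Sum>j<n. a j * p j) = ((\<Sum>j<n. a j * z j) + (\<Sum>j<n. a j * x j)) / (\<tau> + 1)" for a
    by (simp add: p_def sum_divide_distrib sum.distrib[symmetric] distrib_left)
  have "0 < \<tau> + 1" using \<open>0 \<le> \<tau>\<close> by simp
  have "feasible m n A d p"
    unfolding feasible_def lin
  proof (intro allI impI)
    fix r assume "r < m"
    then have "(\<Sum>j<n. A r j * z j) + (\<Sum>j<n. A r j * x j) \<le> (\<tau> + 1) * d r"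
      using z x by (force simp: feasible_def distrib_right intro: add_mono)
    then show "((\<Sum>j<n. A r j * z j) + (\<Sum>j<n. A r j * x j)) / (\<tau> + 1) \<le> d r"
      using \<open>0 < \<tau> + 1\<close> by (simp add: divide_le_eq mult.commute)
  qed
  from opt[OF this] show ?thesis
    using \<open>0 < \<tau> + 1\<close> unfolding lin by (simp add: divide_le_eq algebra_simps)
qed

text \<open>The system \<open>A z \<le> \<tau> d\<close>, \<open>\<tau> \<ge> 0\<close>, \<open>w z \<ge> S \<tau> + 1\<close> in the variables \<open>(z, \<tau>)\<close>,
  with \<open>\<tau>\<close> in column \<open>n\<close> and right-hand side \<open>(0, \<dots>, 0, -1)\<close>.\<close>

definition homogenized_mat ::
    "nat \<Rightarrow> nat \<Rightarrow> (nat \<Rightarrow> nat \<Rightarrow> real) \<Rightarrow> (nat \<Rightarrow> real) \<Rightarrow> (nat \<Rightarrow> real) \<Rightarrow> real \<Rightarrow> nat \<Rightarrow> nat \<Rightarrow> real"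
  where "homogenized_mat m n A d w S r j =
    (if r < m then (if j < n then A r j else - d r)
     else if r = m then (if j < n then 0 else -1)
     else (if j < n then - w j else S))"

lemma homogenized_infeasible:
  assumes x: "feasible m n A d x"
    and opt: "\<And>x'. feasible m n A d x' \<Longrightarrow> (\<Sum>j<n. w j * x' j) \<le> (\<Sum>j<n. w j * x j)"
  shows "\<nexists>z. feasible (Suc (Suc m)) (Suc n) (homogenized_mat m n A d w (\<Sum>j<n. w j * x j))
    (\<lambda>r. if r = Suc m then -1 else 0) z"
proof
  let ?H = "homogenized_mat m n A d w (\<Sum>j<n. w j * x j)"
  assume "\<exists>z. feasible (Suc (Suc m)) (Suc n) ?H (\<lambda>r. if r = Suc m then -1 else 0) z"
  then obtain z where z: "feasible (Suc (Suc m)) (Suc n) ?H (\<lambda>r. if r = Suc m then -1 else 0) z" ..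
  have row: "(\<Sum>j<n. ?H r j * z j) + ?H r n * z n \<le> (if r = Suc m then -1 else 0)"
    if "r < Suc (Suc m)" for r
    using z that by (simp add: feasible_def)
  have "(\<Sum>j<n. A r j * z j) \<le> z n * d r" if "r < m" for r
    using row[of r] that by (simp add: homogenized_mat_def mult.commute)
  moreover have "0 \<le> z n" using row[of m] by (simp add: homogenized_mat_def)
  moreover have "(\<Sum>j<n. w j * x j) * z n + 1 \<le> (\<Sum>j<n. w j * z j)"
    using row[of "Suc m"] by (simp add: homogenized_mat_def sum_negf)
  ultimately show False
    using optimal_no_improving_ray[OF x opt, of "z n" z] by (simp add: mult.commute)
qed

lemma lp_optimal_dual:
  assumes x: "feasible m n A d x"
    and opt: "\<And>x'. feasible m n A d x' \<Longrightarrow> (\<Sum>j<n. w j * x' j) \<le> (\<Sum>j<n. w j * x j)"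
  obtains u where "dual_feasible m n A w u" "(\<Sum>r<m. d r * u r) = (\<Sum>j<n. w j * x j)"
proof -
  define S where "S = (\<Sum>j<n. w j * x j)"
  let ?H = "homogenized_mat m n A d w S"
  from farkas[OF homogenized_infeasible[OF x opt, folded S_def]] obtain v where
    v: "\<forall>r<Suc (Suc m). 0 \<le> v r" "\<forall>j<Suc n. (\<Sum>r<Suc (Suc m). ?H r j * v r) = 0"
      "(\<Sum>r<Suc (Suc m). (if r = Suc m then -1 else 0) * v r) < 0"
    by blast
  define \<beta> where "\<beta> = v (Suc m)"
  have "0 < \<beta>" using v(3) by (simp add: \<beta>_def)
  have cols: "(\<Sum>r<m. A r j * v r) = \<beta> * w j" if "j < n" for j
    using v(2)[rule_format, of j] that by (simp add: homogenized_mat_def \<beta>_def)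
  have rhs: "(\<Sum>r<m. d r * v r) = \<beta> * S - v m"
    using v(2)[rule_format, of n] by (simp add: homogenized_mat_def \<beta>_def sum_negf algebra_simps)
  define u where "u r = v r / \<beta>" for r
  have weighted: "(\<Sum>r<m. g r * u r) = (\<Sum>r<m. g r * v r) / \<beta>" for g
    by (simp add: u_def sum_divide_distrib)
  have du: "dual_feasible m n A w u"
    using v(1) cols \<open>0 < \<beta>\<close> by (simp add: dual_feasible_def weighted) (simp add: u_def)
  have "(\<Sum>r<m. d r * u r) \<le> S"
    using rhs v(1) \<open>0 < \<beta>\<close> by (simp add: weighted divide_le_eq)
  moreover have "S \<le> (\<Sum>r<m. d r * u r)" unfolding S_def by (rule weak_duality[OF x du])
  ultimately show ?thesis using that du unfolding S_def by simp
qed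

lemma TDI_if_integral_duals_dominate:
  assumes "\<And>(w :: nat \<Rightarrow> int) x u. feasible m n A d x \<Longrightarrow>
      dual_feasible m n A (\<lambda>j. of_int (w j)) u \<Longrightarrow>
      \<exists>v :: nat \<Rightarrow> int. dual_feasible m n A (\<lambda>j. of_int (w j)) (\<lambda>r. of_int (v r)) \<and>
        (\<Sum>r<m. d r * of_int (v r)) \<le> (\<Sum>r<m. d r * u r)"
  shows "TDI m n A d"
  unfolding TDI_def
proof (intro allI impI)
  fix w :: "nat \<Rightarrow> int"
  assume "\<exists>x. feasible m n A d x \<and> (\<forall>x'. feasible m n A d x' \<longrightarrow>
    (\<Sum>j<n. of_int (w j) * x' j) \<le> (\<Sum>j<n. of_int (w j) * x j))"
  then obtain x where x: "feasible m n A d x"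
    and opt: "\<And>x'. feasible m n A d x' \<Longrightarrow>
      (\<Sum>j<n. of_int (w j) * x' j) \<le> (\<Sum>j<n. of_int (w j) * x j)"
    by blast
  obtain u where u: "dual_feasible m n A (\<lambda>j. of_int (w j)) u"
    and u_val: "(\<Sum>r<m. d r * u r) = (\<Sum>j<n. of_int (w j) * x j)"
    by (rule lp_optimal_dual[OF x opt])
  from assms[OF x u] obtain v :: "nat \<Rightarrow> int"
    where v: "dual_feasible m n A (\<lambda>j. of_int (w j)) (\<lambda>r. of_int (v r))"
      and v_le: "(\<Sum>r<m. d r * of_int (v r)) \<le> (\<Sum>r<m. d r * u r)"
    by blast
  show "\<exists>v :: nat \<Rightarrow> int. dual_feasible m n A (\<lambda>j. of_int (w j)) (\<lambda>r. of_int (v r)) \<and>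
      (\<forall>u'. dual_feasible m n A (\<lambda>j. of_int (w j)) u' \<longrightarrow>
         (\<Sum>r<m. d r * of_int (v r)) \<le> (\<Sum>r<m. d r * u' r))"
    using v v_le u_val weak_duality[OF x] by (intro exI[of _ v]) force
qed

section \<open>Systems whose last variable is confined to \<open>[0, 1]\<close>\<close>

definition ext_obj :: "nat \<Rightarrow> (nat \<Rightarrow> int) \<Rightarrow> real \<Rightarrow> nat \<Rightarrow> real" where
  "ext_obj n w t j = (if j < n then of_int (w j) else t)"

lemma sum_ext_obj: "(\<Sum>j<Suc n. ext_obj n w t j * x j) = (\<Sum>j<n. of_int (w j) * x j) + t * x n"
  by (simp add: ext_obj_def)

lemma feasible_sys_mat_iff:
  "feasible m (Suc n) (sys_mat n A b) d x \<longleftrightarrow>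
     (\<forall>r<m. (\<Sum>j<n. of_int (A r j) * x j) + of_int (b r) * x n \<le> d r)"
  by (simp add: feasible_def sys_mat_def)

lemma dual_feasible_sys_mat_iff:
  "dual_feasible m (Suc n) (sys_mat n A b) (ext_obj n w t) u \<longleftrightarrow>
     (\<forall>r<m. 0 \<le> u r) \<and> (\<forall>j<n. (\<Sum>r<m. of_int (A r j) * u r) = of_int (w j)) \<and>
     (\<Sum>r<m. of_int (b r) * u r) = t"
  by (auto simp: dual_feasible_def sys_mat_def ext_obj_def less_Suc_eq)

definition affine_on_unit_intervals :: "(real \<Rightarrow> real) \<Rightarrow> bool" where
  "affine_on_unit_intervals G \<longleftrightarrow>
     (\<forall>k::int. \<forall>t. of_int k \<le> t \<and> t \<le> of_int k + 1 \<longrightarrow>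
        G t = (of_int k + 1 - t) * G (of_int k) + (t - of_int k) * G (of_int k + 1))"

lemma affine_on_unit_intervalsI:
  assumes integral: "\<And>k::int. G (of_int k) \<in> \<int>"
    and mono_lipschitz: "\<And>t s. t \<le> s \<Longrightarrow> G t \<le> G s \<and> G s \<le> G t + (s - t)"
  shows "affine_on_unit_intervals G"
  unfolding affine_on_unit_intervals_def
proof (intro allI impI, elim conjE)
  fix k :: int and t :: real
  assume t: "of_int k \<le> t" "t \<le> of_int k + 1"
  obtain a where a: "G (of_int k) = of_int a" using integral[of k] by (auto elim: Ints_cases)
  obtain a' where a': "G (of_int k + 1) = of_int a'"
    using integral[of "k + 1"] by (auto elim: Ints_cases)
  have "a \<le> a'" "a' \<le> a + 1"
    using mono_lipschitz[of "of_int k" "of_int k + 1"] a a' by simp_all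
  then consider "a' = a" | "a' = a + 1" by linarith
  then show "G t = (of_int k + 1 - t) * G (of_int k) + (t - of_int k) * G (of_int k + 1)"
    using mono_lipschitz[OF t(1)] mono_lipschitz[OF t(2)] a a'
    by cases (simp_all add: algebra_simps)
qed

lemma affine_on_unit_intervals_reflect:
  assumes "affine_on_unit_intervals G"
  shows "affine_on_unit_intervals (\<lambda>t. G (of_int c - t))"
  unfolding affine_on_unit_intervals_def
proof (intro allI impI, elim conjE)
  fix k :: int and t :: real
  assume "of_int k \<le> t" "t \<le> of_int k + 1"
  then have "of_int (c - k - 1) \<le> of_int c - t" "of_int c - t \<le> of_int (c - k - 1) + 1" by simp_all
  with assms show "G (of_int c - t) =
      (of_int k + 1 - t) * G (of_int c - of_int k) + (t - of_int k) * G (of_int c - (of_int k + 1))"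
    unfolding affine_on_unit_intervals_def by (fastforce simp: algebra_simps)
qed

lemma affine_on_unit_intervals_add:
  assumes "affine_on_unit_intervals G" "affine_on_unit_intervals H"
  shows "affine_on_unit_intervals (\<lambda>t. G t + H t)"
  unfolding affine_on_unit_intervals_def
proof (intro allI impI)
  fix k :: int and t :: real
  assume "of_int k \<le> t \<and> t \<le> of_int k + 1"
  with assms have G: "G t = (of_int k + 1 - t) * G (of_int k) + (t - of_int k) * G (of_int k + 1)"
    and H: "H t = (of_int k + 1 - t) * H (of_int k) + (t - of_int k) * H (of_int k + 1)"
    unfolding affine_on_unit_intervals_def by blast+
  show "G t + H t = (of_int k + 1 - t) * (G (of_int k) + H (of_int k)) +
      (t - of_int k) * (G (of_int k + 1) + H (of_int k + 1))"
    unfolding G H by (simp add: algebra_simps)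
qed

lemma affine_on_unit_intervals_integer_le:
  assumes "affine_on_unit_intervals G"
  obtains k :: int where "G (of_int k) \<le> G t"
proof -
  define k where "k = \<lfloor>t\<rfloor>"
  have t: "0 \<le> t - of_int k" "0 \<le> of_int k + 1 - t" unfolding k_def by linarith+
  then have chord: "G t = (of_int k + 1 - t) * G (of_int k) + (t - of_int k) * G (of_int k + 1)"
    using assms unfolding affine_on_unit_intervals_def by simp
  show ?thesis
  proof (cases "G (of_int k) \<le> G (of_int k + 1)")
    case True
    then have "0 \<le> (t - of_int k) * (G (of_int k + 1) - G (of_int k))" using t by simp
    then have "G (of_int k) \<le> G t" unfolding chord by (simp add: algebra_simps)
    then show ?thesis by (rule that)
  next
    case False
    then have "0 \<le> (of_int k + 1 - t) * (G (of_int k) - G (of_int k + 1))" using t by simp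
    then have "G (of_int (k + 1)) \<le> G t" unfolding chord by (simp add: algebra_simps)
    then show ?thesis by (rule that)
  qed
qed

locale y_bounded_tdi =
  fixes m n :: nat and A :: "nat \<Rightarrow> nat \<Rightarrow> int" and b d w :: "nat \<Rightarrow> int"
  assumes tdi: "TDI m (Suc n) (sys_mat n A b) (\<lambda>r. of_int (d r))"
    and y_bounds: "\<And>(x :: nat \<Rightarrow> real) (y :: real).
       (\<forall>r<m. (\<Sum>j<n. of_int (A r j) * x j) + of_int (b r) * y \<le> of_int (d r))
       \<Longrightarrow> 0 \<le> y \<and> y \<le> 1"
    and nonempty: "\<exists>x. feasible m (Suc n) (sys_mat n A b) (\<lambda>r. of_int (d r)) x"
    and bounded: "\<exists>t M. \<forall>x. feasible m (Suc n) (sys_mat n A b) (\<lambda>r. of_int (d r)) x \<longrightarrow>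
       (\<Sum>j<Suc n. ext_obj n w t j * x j) \<le> M"
begin

abbreviation feas :: "(nat \<Rightarrow> real) \<Rightarrow> bool" where
  "feas \<equiv> feasible m (Suc n) (sys_mat n A b) (\<lambda>r. of_int (d r))"

abbreviation obj :: "real \<Rightarrow> (nat \<Rightarrow> real) \<Rightarrow> real" where
  "obj t x \<equiv> \<Sum>j<Suc n. ext_obj n w t j * x j"

abbreviation dual_feas :: "real \<Rightarrow> (nat \<Rightarrow> real) \<Rightarrow> bool" where
  "dual_feas t \<equiv> dual_feasible m (Suc n) (sys_mat n A b) (ext_obj n w t)"

definition opt_val :: "real \<Rightarrow> real" where
  "opt_val t = (SUP x\<in>{x. feas x}. obj t x)"

lemma feas_y_bounds: "feas x \<Longrightarrow> 0 \<le> x n \<and> x n \<le> 1"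
  by (rule y_bounds) (simp add: feasible_sys_mat_iff)

lemma obj_shift: "obj s x = obj t x + (s - t) * x n"
  unfolding sum_ext_obj by (simp add: algebra_simps)

lemma obj_bounded: "\<exists>M. \<forall>x. feas x \<longrightarrow> obj t x \<le> M"
proof -
  obtain t0 M where M: "\<forall>x. feas x \<longrightarrow> obj t0 x \<le> M" using bounded by auto
  have "obj t x \<le> M + \<bar>t - t0\<bar>" if "feas x" for x
  proof -
    have "(t - t0) * x n \<le> \<bar>t - t0\<bar> * x n"
      using feas_y_bounds[OF that] by (intro mult_right_mono) auto
    also have "\<dots> \<le> \<bar>t - t0\<bar>"
      using feas_y_bounds[OF that] by (simp add: mult_left_le)
    finally have "(t - t0) * x n \<le> \<bar>t - t0\<bar>" .
    then show ?thesis using M[rule_format, OF that] obj_shift[of t x t0] by linarith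
  qed
  then show ?thesis by blast
qed

lemma opt_val_attained:
  "\<exists>x. feas x \<and> obj t x = opt_val t \<and> (\<forall>x'. feas x' \<longrightarrow> obj t x' \<le> opt_val t)"
proof -
  obtain x0 where x0: "feas x0" using nonempty by blast
  obtain M where M: "\<forall>x. feas x \<longrightarrow> obj t x \<le> M" using obj_bounded by blast
  obtain x where x: "feas x" "\<And>x'. feas x' \<Longrightarrow> obj t x' \<le> obj t x"
    using lp_optimum_exists[OF x0, of "ext_obj n w t" M] M by blast
  then have "opt_val t = obj t x" unfolding opt_val_def by (intro cSup_eq_maximum) auto
  with x show ?thesis by auto
qed

lemma opt_val_le_dual: "dual_feas t u \<Longrightarrow> opt_val t \<le> (\<Sum>r<m. of_int (d r) * u r)"
  by (metis opt_val_attained weak_duality)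

lemma opt_val_integral_dual:
  obtains u :: "nat \<Rightarrow> int" where "dual_feas (of_int k) (\<lambda>r. of_int (u r))"
    "(\<Sum>r<m. of_int (d r) * of_int (u r)) = opt_val (of_int k)"
proof -
  obtain x where x: "feas x" "obj (of_int k) x = opt_val (of_int k)"
    and opt: "\<And>x'. feas x' \<Longrightarrow> obj (of_int k) x' \<le> obj (of_int k) x"
    using opt_val_attained by fastforce
  obtain u0 where u0: "dual_feas (of_int k) u0" "(\<Sum>r<m. of_int (d r) * u0 r) = obj (of_int k) x"
    by (rule lp_optimal_dual[OF x(1) opt])
  define w' where "w' j = (if j < n then w j else k)" for j
  have w': "of_int (w' j) = ext_obj n w (of_int k) j" for j
    by (simp add: w'_def ext_obj_def)
  have "\<exists>u :: nat \<Rightarrow> int. dual_feas (of_int k) (\<lambda>r. of_int (u r)) \<and>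
      (\<forall>u'. dual_feas (of_int k) u' \<longrightarrow>
         (\<Sum>r<m. of_int (d r) * of_int (u r)) \<le> (\<Sum>r<m. of_int (d r) * u' r))"
    using tdi x(1) opt unfolding TDI_def by (elim allE[of _ w']) (auto simp only: w')
  then obtain u :: "nat \<Rightarrow> int" where u: "dual_feas (of_int k) (\<lambda>r. of_int (u r))"
    "(\<Sum>r<m. of_int (d r) * of_int (u r)) \<le> (\<Sum>r<m. of_int (d r) * u0 r)"
    using u0(1) by blast
  have "(\<Sum>r<m. of_int (d r) * of_int (u r)) = opt_val (of_int k)"
    using u(2) u0(2) x(2) opt_val_le_dual[OF u(1)] by simp
  with u(1) show ?thesis by (rule that)
qed

lemma opt_val_Ints: "opt_val (of_int k) \<in> \<int>"
proof -
  obtain u :: "nat \<Rightarrow> int" where "(\<Sum>r<m. of_int (d r) * of_int (u r)) = opt_val (of_int k)"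
    by (rule opt_val_integral_dual[of k])
  then have "opt_val (of_int k) = of_int (\<Sum>r<m. d r * u r)" by simp
  then show ?thesis by (metis Ints_of_int)
qed

lemma opt_val_mono_lipschitz:
  assumes "t \<le> s"
  shows "opt_val t \<le> opt_val s \<and> opt_val s \<le> opt_val t + (s - t)"
proof -
  obtain xt where xt: "feas xt" "obj t xt = opt_val t" "\<forall>x'. feas x' \<longrightarrow> obj t x' \<le> opt_val t"
    using opt_val_attained by blast
  obtain xs where xs: "feas xs" "obj s xs = opt_val s" "\<forall>x'. feas x' \<longrightarrow> obj s x' \<le> opt_val s"
    using opt_val_attained by blast
  have "obj t xt \<le> obj s xt"
    using feas_y_bounds[OF xt(1)] assms obj_shift[of s xt t] by simp
  moreover have "obj s xs \<le> obj t xs + (s - t)"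
    using feas_y_bounds[OF xs(1)] assms obj_shift[of s xs t] by (simp add: mult_left_le)
  ultimately show ?thesis using xt xs by fastforce
qed

lemma affine_on_unit_intervals_opt_val: "affine_on_unit_intervals opt_val"
  using opt_val_Ints opt_val_mono_lipschitz by (rule affine_on_unit_intervalsI)

end

lemma integral_split_dual:
  assumes "y_bounded_tdi m1 n1 A1 b1 d1 w1" and "y_bounded_tdi m2 n2 A2 b2 d2 w2"
    and u1: "dual_feasible m1 (Suc n1) (sys_mat n1 A1 b1) (ext_obj n1 w1 t) u1"
    and u2: "dual_feasible m2 (Suc n2) (sys_mat n2 A2 b2) (ext_obj n2 w2 (of_int c - t)) u2"
  obtains k :: int and v1 v2 :: "nat \<Rightarrow> int" where
    "dual_feasible m1 (Suc n1) (sys_mat n1 A1 b1) (ext_obj n1 w1 (of_int k)) (\<lambda>r. of_int (v1 r))"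
    "dual_feasible m2 (Suc n2) (sys_mat n2 A2 b2) (ext_obj n2 w2 (of_int c - of_int k))
       (\<lambda>r. of_int (v2 r))"
    "(\<Sum>r<m1. of_int (d1 r) * of_int (v1 r)) + (\<Sum>r<m2. of_int (d2 r) * of_int (v2 r)) \<le>
       (\<Sum>r<m1. of_int (d1 r) * u1 r) + (\<Sum>r<m2. of_int (d2 r) * u2 r)"
proof -
  interpret S1: y_bounded_tdi m1 n1 A1 b1 d1 w1 by fact
  interpret S2: y_bounded_tdi m2 n2 A2 b2 d2 w2 by fact
  define H where "H s = S1.opt_val s + S2.opt_val (of_int c - s)" for s
  have "affine_on_unit_intervals H"
    unfolding H_def using S1.affine_on_unit_intervals_opt_val S2.affine_on_unit_intervals_opt_val
    by (intro affine_on_unit_intervals_add affine_on_unit_intervals_reflect)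
  then obtain k :: int where k: "H (of_int k) \<le> H t"
    by (rule affine_on_unit_intervals_integer_le)
  obtain v1 :: "nat \<Rightarrow> int" where v1: "S1.dual_feas (of_int k) (\<lambda>r. of_int (v1 r))"
    "(\<Sum>r<m1. of_int (d1 r) * of_int (v1 r)) = S1.opt_val (of_int k)"
    by (rule S1.opt_val_integral_dual)
  obtain v2 :: "nat \<Rightarrow> int" where v2: "S2.dual_feas (of_int (c - k)) (\<lambda>r. of_int (v2 r))"
    "(\<Sum>r<m2. of_int (d2 r) * of_int (v2 r)) = S2.opt_val (of_int (c - k))"
    by (rule S2.opt_val_integral_dual)
  have "H t \<le> (\<Sum>r<m1. of_int (d1 r) * u1 r) + (\<Sum>r<m2. of_int (d2 r) * u2 r)"
    using S1.opt_val_le_dual[OF u1] S2.opt_val_le_dual[OF u2] by (simp add: H_def)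
  with k v1 v2 show ?thesis by (intro that[of k v1 v2]) (simp_all add: H_def)
qed

section \<open>The combined system\<close>

lemma sum_lessThan_add:
  fixes f :: "nat \<Rightarrow> 'a::comm_monoid_add"
  shows "(\<Sum>j<a + b. f j) = (\<Sum>j<a. f j) + (\<Sum>j<b. f (a + j))"
  by (induction b) (simp_all add: add.assoc)

lemma less_add_add_1_cases:
  fixes j n1 n2 :: nat
  assumes "j < n1 + n2 + 1"
  obtains "j < n1" | j' where "j' < n2" "j = n1 + j'" | "j = n1 + n2"
proof -
  consider "j < n1" | "n1 \<le> j" "j < n1 + n2" | "j = n1 + n2" using assms by linarith
  then show ?thesis
  proof cases
    case 2
    then show ?thesis using that(2)[of "j - n1"] by simp
  qed (use that in blast)+
qed

lemma comb_rhs_sum: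
  "(\<Sum>r<m1 + m2. comb_rhs m1 d1 d2 r * v r) =
     (\<Sum>r<m1. of_int (d1 r) * v r) + (\<Sum>r<m2. of_int (d2 r) * v (m1 + r))"
  by (simp add: sum_lessThan_add comb_rhs_def)

context
  fixes m1 n1 m2 n2 :: nat and A1 A2 :: "nat \<Rightarrow> nat \<Rightarrow> int" and b1 b2 :: "nat \<Rightarrow> int"
begin

lemma comb_mat_row1:
  assumes "r < m1"
  shows "(\<Sum>j<n1 + n2 + 1. comb_mat m1 n1 n2 A1 b1 A2 b2 r j * x j) =
    (\<Sum>j<n1. of_int (A1 r j) * x j) + of_int (b1 r) * x (n1 + n2)"
  using assms by (simp add: sum_lessThan_add comb_mat_def)

lemma comb_mat_row2:
  shows "(\<Sum>j<n1 + n2 + 1. comb_mat m1 n1 n2 A1 b1 A2 b2 (m1 + r) j * x j) =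
    (\<Sum>j<n2. of_int (A2 r j) * x (n1 + j)) + of_int (b2 r) * x (n1 + n2)"
  by (simp add: sum_lessThan_add comb_mat_def)

lemma comb_mat_col1:
  assumes "j < n1"
  shows "(\<Sum>r<m1 + m2. comb_mat m1 n1 n2 A1 b1 A2 b2 r j * v r) =
    (\<Sum>r<m1. of_int (A1 r j) * v r)"
  using assms by (simp add: sum_lessThan_add comb_mat_def)

lemma comb_mat_col2:
  assumes "j < n2"
  shows "(\<Sum>r<m1 + m2. comb_mat m1 n1 n2 A1 b1 A2 b2 r (n1 + j) * v r) =
    (\<Sum>r<m2. of_int (A2 r j) * v (m1 + r))"
  using assms by (simp add: sum_lessThan_add comb_mat_def)

lemma comb_mat_col_y:
  "(\<Sum>r<m1 + m2. comb_mat m1 n1 n2 A1 b1 A2 b2 r (n1 + n2) * v r) =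
     (\<Sum>r<m1. of_int (b1 r) * v r) + (\<Sum>r<m2. of_int (b2 r) * v (m1 + r))"
  by (simp add: sum_lessThan_add comb_mat_def)

lemma comb_feasible_split:
  assumes "feasible (m1 + m2) (n1 + n2 + 1) (comb_mat m1 n1 n2 A1 b1 A2 b2) (comb_rhs m1 d1 d2) x"
  shows "feasible m1 (Suc n1) (sys_mat n1 A1 b1) (\<lambda>r. of_int (d1 r))
      (\<lambda>j. if j < n1 then x j else x (n1 + n2))"
    and "feasible m2 (Suc n2) (sys_mat n2 A2 b2) (\<lambda>r. of_int (d2 r))
      (\<lambda>j. if j < n2 then x (n1 + j) else x (n1 + n2))"
proof -
  have row: "(\<Sum>j<n1 + n2 + 1. comb_mat m1 n1 n2 A1 b1 A2 b2 r j * x j) \<le> comb_rhs m1 d1 d2 r"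
    if "r < m1 + m2" for r
    using assms that unfolding feasible_def by blast
  show "feasible m1 (Suc n1) (sys_mat n1 A1 b1) (\<lambda>r. of_int (d1 r))
      (\<lambda>j. if j < n1 then x j else x (n1 + n2))"
    unfolding feasible_sys_mat_iff
  proof (intro allI impI)
    fix r assume r: "r < m1"
    from row[of r] r show "(\<Sum>j<n1. of_int (A1 r j) * (if j < n1 then x j else x (n1 + n2))) +
        of_int (b1 r) * (if n1 < n1 then x n1 else x (n1 + n2)) \<le> of_int (d1 r)"
      unfolding comb_mat_row1[OF r] comb_rhs_def by simp
  qed
  show "feasible m2 (Suc n2) (sys_mat n2 A2 b2) (\<lambda>r. of_int (d2 r))
      (\<lambda>j. if j < n2 then x (n1 + j) else x (n1 + n2))"
    unfolding feasible_sys_mat_iff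
  proof (intro allI impI)
    fix r assume r: "r < m2"
    from row[of "m1 + r"] r
    show "(\<Sum>j<n2. of_int (A2 r j) * (if j < n2 then x (n1 + j) else x (n1 + n2))) +
        of_int (b2 r) * (if n2 < n2 then x (n1 + n2) else x (n1 + n2)) \<le> of_int (d2 r)"
      unfolding comb_mat_row2 comb_rhs_def by simp
  qed
qed

lemma comb_dual_feasible_split:
  assumes "dual_feasible (m1 + m2) (n1 + n2 + 1) (comb_mat m1 n1 n2 A1 b1 A2 b2)
    (\<lambda>j. of_int (w j)) u"
  obtains t where "dual_feasible m1 (Suc n1) (sys_mat n1 A1 b1) (ext_obj n1 w t) u"
    and "dual_feasible m2 (Suc n2) (sys_mat n2 A2 b2)
      (ext_obj n2 (\<lambda>j. w (n1 + j)) (of_int (w (n1 + n2)) - t)) (\<lambda>r. u (m1 + r))"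
proof -
  from assms have nonneg: "\<forall>r<m1 + m2. 0 \<le> u r"
    and col: "\<And>j. j < n1 + n2 + 1 \<Longrightarrow>
      (\<Sum>r<m1 + m2. comb_mat m1 n1 n2 A1 b1 A2 b2 r j * u r) = of_int (w j)"
    by (simp_all add: dual_feasible_def)
  define t where "t = (\<Sum>r<m1. of_int (b1 r) * u r)"
  have "dual_feasible m1 (Suc n1) (sys_mat n1 A1 b1) (ext_obj n1 w t) u"
    unfolding dual_feasible_sys_mat_iff t_def
  proof (intro conjI allI impI refl)
    show "0 \<le> u r" if "r < m1" for r using nonneg that by simp
    show "(\<Sum>r<m1. of_int (A1 r j) * u r) = of_int (w j)" if "j < n1" for j
      using col[of j] comb_mat_col1[OF that] that by simp
  qed
  moreover have "dual_feasible m2 (Suc n2) (sys_mat n2 A2 b2)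
      (ext_obj n2 (\<lambda>j. w (n1 + j)) (of_int (w (n1 + n2)) - t)) (\<lambda>r. u (m1 + r))"
    unfolding dual_feasible_sys_mat_iff t_def
  proof (intro conjI allI impI)
    show "0 \<le> u (m1 + r)" if "r < m2" for r using nonneg that by simp
    show "(\<Sum>r<m2. of_int (A2 r j) * u (m1 + r)) = of_int (w (n1 + j))" if "j < n2" for j
      using col[of "n1 + j"] comb_mat_col2[OF that] that by simp
    show "(\<Sum>r<m2. of_int (b2 r) * u (m1 + r)) =
        of_int (w (n1 + n2)) - (\<Sum>r<m1. of_int (b1 r) * u r)"
      using col[of "n1 + n2"] comb_mat_col_y by simp
  qed
  ultimately show ?thesis by (rule that)
qed

lemma comb_dual_feasible_join:
  assumes "dual_feasible m1 (Suc n1) (sys_mat n1 A1 b1) (ext_obj n1 w t) u"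
    and "dual_feasible m2 (Suc n2) (sys_mat n2 A2 b2)
      (ext_obj n2 (\<lambda>j. w (n1 + j)) (of_int (w (n1 + n2)) - t)) (\<lambda>r. u (m1 + r))"
  shows "dual_feasible (m1 + m2) (n1 + n2 + 1) (comb_mat m1 n1 n2 A1 b1 A2 b2)
    (\<lambda>j. of_int (w j)) u"
  unfolding dual_feasible_def
proof (intro conjI allI impI)
  from assms have nonneg1: "\<forall>r<m1. 0 \<le> u r" and nonneg2: "\<forall>r<m2. 0 \<le> u (m1 + r)"
    and col1: "\<forall>j<n1. (\<Sum>r<m1. of_int (A1 r j) * u r) = of_int (w j)"
    and col2: "\<forall>j<n2. (\<Sum>r<m2. of_int (A2 r j) * u (m1 + r)) = of_int (w (n1 + j))"
    and col_y: "(\<Sum>r<m1. of_int (b1 r) * u r) + (\<Sum>r<m2. of_int (b2 r) * u (m1 + r)) =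
      of_int (w (n1 + n2))"
    unfolding dual_feasible_sys_mat_iff by auto
  {
    fix r assume "r < m1 + m2"
    then show "0 \<le> u r" using nonneg1 nonneg2 by (cases "r < m1") (auto dest: spec[of _ "r - m1"])
  next
    fix j assume "j < n1 + n2 + 1"
    then show "(\<Sum>r<m1 + m2. comb_mat m1 n1 n2 A1 b1 A2 b2 r j * u r) = of_int (w j)"
      by (cases rule: less_add_add_1_cases)
        (simp_all add: comb_mat_col1 comb_mat_col2 comb_mat_col_y col1 col2 col_y)
  }
qed

lemma comb_integral_dual_le:
  assumes "y_bounded_tdi m1 n1 A1 b1 d1 w" and "y_bounded_tdi m2 n2 A2 b2 d2 (\<lambda>j. w (n1 + j))"
    and "dual_feasible m1 (Suc n1) (sys_mat n1 A1 b1) (ext_obj n1 w t) u"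
    and "dual_feasible m2 (Suc n2) (sys_mat n2 A2 b2)
      (ext_obj n2 (\<lambda>j. w (n1 + j)) (of_int (w (n1 + n2)) - t)) (\<lambda>r. u (m1 + r))"
  shows "\<exists>v :: nat \<Rightarrow> int. dual_feasible (m1 + m2) (n1 + n2 + 1) (comb_mat m1 n1 n2 A1 b1 A2 b2)
      (\<lambda>j. of_int (w j)) (\<lambda>r. of_int (v r)) \<and>
    (\<Sum>r<m1 + m2. comb_rhs m1 d1 d2 r * of_int (v r)) \<le> (\<Sum>r<m1 + m2. comb_rhs m1 d1 d2 r * u r)"
proof -
  obtain k :: int and v1 v2 :: "nat \<Rightarrow> int" where
    v1: "dual_feasible m1 (Suc n1) (sys_mat n1 A1 b1) (ext_obj n1 w (of_int k)) (\<lambda>r. of_int (v1 r))"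
    and v2: "dual_feasible m2 (Suc n2) (sys_mat n2 A2 b2)
      (ext_obj n2 (\<lambda>j. w (n1 + j)) (of_int (w (n1 + n2)) - of_int k)) (\<lambda>r. of_int (v2 r))"
    and le: "(\<Sum>r<m1. of_int (d1 r) * of_int (v1 r)) + (\<Sum>r<m2. of_int (d2 r) * of_int (v2 r)) \<le>
      (\<Sum>r<m1. of_int (d1 r) * u r) + (\<Sum>r<m2. of_int (d2 r) * u (m1 + r))"
    using assms by (rule integral_split_dual)
  define v where "v r = (if r < m1 then v1 r else v2 (r - m1))" for r
  have "dual_feasible m1 (Suc n1) (sys_mat n1 A1 b1) (ext_obj n1 w (of_int k)) (\<lambda>r. of_int (v r))"
    using v1 by (subst dual_feasible_cong[where u' = "\<lambda>r. of_int (v1 r)"]) (simp_all add: v_def)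
  with v2 have "dual_feasible (m1 + m2) (n1 + n2 + 1) (comb_mat m1 n1 n2 A1 b1 A2 b2)
      (\<lambda>j. of_int (w j)) (\<lambda>r. of_int (v r))"
    by (intro comb_dual_feasible_join) (simp_all add: v_def)
  moreover have "(\<Sum>r<m1 + m2. comb_rhs m1 d1 d2 r * of_int (v r)) \<le>
      (\<Sum>r<m1 + m2. comb_rhs m1 d1 d2 r * u r)"
    using le by (simp add: comb_rhs_sum v_def)
  ultimately show ?thesis by blast
qed

end

theorem proposition3p9:
  fixes m1 n1 m2 n2 :: nat
    and A1 A2 :: "nat \<Rightarrow> nat \<Rightarrow> int" and b1 d1 b2 d2 :: "nat \<Rightarrow> int"
  assumes tdi1: "TDI m1 (Suc n1) (sys_mat n1 A1 b1) (\<lambda>r. of_int (d1 r))"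
    and tdi2: "TDI m2 (Suc n2) (sys_mat n2 A2 b2) (\<lambda>r. of_int (d2 r))"
    and bnd1: "\<And>(x :: nat \<Rightarrow> real) (y :: real).
       (\<forall>r<m1. (\<Sum>j<n1. of_int (A1 r j) * x j) + of_int (b1 r) * y \<le> of_int (d1 r))
       \<Longrightarrow> 0 \<le> y \<and> y \<le> 1"
    and bnd2: "\<And>(x :: nat \<Rightarrow> real) (y :: real).
       (\<forall>r<m2. (\<Sum>j<n2. of_int (A2 r j) * x j) + of_int (b2 r) * y \<le> of_int (d2 r))
       \<Longrightarrow> 0 \<le> y \<and> y \<le> 1"
  shows "TDI (m1 + m2) (n1 + n2 + 1) (comb_mat m1 n1 n2 A1 b1 A2 b2) (comb_rhs m1 d1 d2)"
proof (rule TDI_if_integral_duals_dominate)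
  fix w :: "nat \<Rightarrow> int" and x u
  assume x: "feasible (m1 + m2) (n1 + n2 + 1) (comb_mat m1 n1 n2 A1 b1 A2 b2) (comb_rhs m1 d1 d2) x"
    and "dual_feasible (m1 + m2) (n1 + n2 + 1) (comb_mat m1 n1 n2 A1 b1 A2 b2)
      (\<lambda>j. of_int (w j)) u"
  then obtain t where u1: "dual_feasible m1 (Suc n1) (sys_mat n1 A1 b1) (ext_obj n1 w t) u"
    and u2: "dual_feasible m2 (Suc n2) (sys_mat n2 A2 b2)
      (ext_obj n2 (\<lambda>j. w (n1 + j)) (of_int (w (n1 + n2)) - t)) (\<lambda>r. u (m1 + r))"
    by (blast elim: comb_dual_feasible_split)
  have "y_bounded_tdi m1 n1 A1 b1 d1 w"
    using tdi1 bnd1 comb_feasible_split(1)[OF x] weak_duality[OF _ u1] by unfold_locales blast+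
  moreover have "y_bounded_tdi m2 n2 A2 b2 d2 (\<lambda>j. w (n1 + j))"
    using tdi2 bnd2 comb_feasible_split(2)[OF x] weak_duality[OF _ u2] by unfold_locales blast+
  ultimately show "\<exists>v :: nat \<Rightarrow> int. dual_feasible (m1 + m2) (n1 + n2 + 1)
      (comb_mat m1 n1 n2 A1 b1 A2 b2) (\<lambda>j. of_int (w j)) (\<lambda>r. of_int (v r)) \<and>
    (\<Sum>r<m1 + m2. comb_rhs m1 d1 d2 r * of_int (v r)) \<le> (\<Sum>r<m1 + m2. comb_rhs m1 d1 d2 r * u r)"
    using u1 u2 by (rule comb_integral_dual_le)
qed

end
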